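(* Let $s,d,t$ be positive integers, $\mathbb{F}$ a field, $\mathcal{C}\subseteq\mathbb{F}^n$ a linear code of rate $(s-dt)/s$, and $\mathcal{L}:[n]\to[s]$ a labeling with $\Delta_{\mathcal{L}}(\mathcal{C})\ge dt+1$. Then $|\mathcal{L}^{-1}(\lambda)|=|\mathcal{L}^{-1}(\lambda')|$ for all $\lambda,\lambda'\in[s]$.
   Context: A labeling is a surjection $\mathcal{L}:[n]\to[s]$, and $\mathcal{L}^{-1}(\lambda)=\{i\in[n]:\mathcal{L}(i)=\lambda\}$. Labelweight: for $\mathbf{c}\in\mathbb{F}^n$, $\Delta_{\mathcal{L}}(\mathbf{c})=|\{\mathcal{L}(i): c_i\neq0\}|$; for a code $\mathcal{C}$, $\Delta_{\mathcal{L}}(\mathcal{C})=\min_{\mathbf{0}\ne\mathbf{c}\in\mathcal{C}}\Delta_{\mathcal{L}}(\mathbf{c})$. Rate of a linear code of dimension $k$ in $\mathbb{F}^n$ is $k/n$. *)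

theory Defs
  imports "HOL-Analysis.Analysis" "HOL-Library.Extended_Nat"
begin

text \<open>Coordinates are indexed by a finite type 'n (so n = CARD('n)); labels are 1..s.\<close>

definition labelweight_vec :: "('n::finite \<Rightarrow> nat) \<Rightarrow> 'a::zero ^ 'n \<Rightarrow> nat" where
  "labelweight_vec L c = card {L i | i. c $ i \<noteq> 0}"

definition labelweight_code :: "('n::finite \<Rightarrow> nat) \<Rightarrow> ('a::zero ^ 'n) set \<Rightarrow> enat" where
  "labelweight_code L C = (INF c \<in> C - {0}. enat (labelweight_vec L c))"

end

theory Submission
  imports Defs
begin

text \<open>A nonzero codeword supported on the coordinates carrying a set \<open>A\<close> of \<open>dt\<close> labels would
  have labelweight at most \<open>dt\<close>; so \<open>C\<close> meets that coordinate subspace trivially and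
  \<open>dim C + card (L -` A) \<le> n\<close>. By the rate hypothesis the bound \<open>n - dim C = n dt / s\<close> is
  exactly the average of \<open>card (L -` A)\<close> over all \<open>dt\<close>-subsets \<open>A\<close> of the labels, so every
  \<open>dt\<close>-subset attains it, and exchanging a single label in such a subset shows that all fibres
  have equal size.\<close>

lemma card_vimage_eq_sum_card_fibers:
  fixes L :: "'n::finite \<Rightarrow> 'b"
  assumes "finite A"
  shows "card (L -` A) = (\<Sum>l\<in>A. card (L -` {l}))"
proof -
  have "L -` A = (\<Union>l\<in>A. L -` {l})" by auto
  then show ?thesis using assms by (simp add: card_UN_disjoint disjoint_iff)
qed

lemma card_subsets_containing:
  assumes "finite U" and "x \<in> U" and "0 < m"
  shows "card {A. A \<subseteq> U \<and> card A = m \<and> x \<in> A} = (card U - 1) choose (m - 1)"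
proof -
  have "bij_betw (insert x) {B. B \<subseteq> U - {x} \<and> card B = m - 1} {A. A \<subseteq> U \<and> card A = m \<and> x \<in> A}"
  proof (rule bij_betw_byWitness[where f' = "\<lambda>A. A - {x}"])
    show "insert x ` {B. B \<subseteq> U - {x} \<and> card B = m - 1} \<subseteq> {A. A \<subseteq> U \<and> card A = m \<and> x \<in> A}"
      using assms by (auto simp: card_insert_if finite_subset)
    show "(\<lambda>A. A - {x}) ` {A. A \<subseteq> U \<and> card A = m \<and> x \<in> A} \<subseteq> {B. B \<subseteq> U - {x} \<and> card B = m - 1}"
      using assms by (auto simp: finite_subset)
  qed auto
  then have "card {A. A \<subseteq> U \<and> card A = m \<and> x \<in> A} = card {B. B \<subseteq> U - {x} \<and> card B = m - 1}"
    by (simp add: bij_betw_same_card)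
  also have "\<dots> = (card U - 1) choose (m - 1)"
    using assms by (simp add: n_subsets)
  finally show ?thesis .
qed

lemma sum_over_subsets_of_card:
  fixes a :: "'b \<Rightarrow> 'c::comm_semiring_1"
  assumes "finite U" and "0 < m"
  shows "(\<Sum>A | A \<subseteq> U \<and> card A = m. sum a A) = sum a U * of_nat ((card U - 1) choose (m - 1))"
proof -
  let ?S = "{A. A \<subseteq> U \<and> card A = m}"
  have fin: "finite ?S" using assms(1) by auto
  have "(\<Sum>A\<in>?S. sum a A) = (\<Sum>A\<in>?S. \<Sum>x\<in>U. if x \<in> A then a x else 0)"
    by (rule sum.cong[OF refl]) (use assms(1) in \<open>simp add: sum.inter_restrict[symmetric] Int_absorb1\<close>)
  also have "\<dots> = (\<Sum>x\<in>U. \<Sum>A\<in>?S. if x \<in> A then a x else 0)"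
    by (rule sum.swap)
  also have "\<dots> = (\<Sum>x\<in>U. a x * of_nat (card {A. A \<subseteq> U \<and> card A = m \<and> x \<in> A}))"
    by (rule sum.cong[OF refl]) (use fin in \<open>simp add: sum.inter_filter[symmetric] conj_ac mult.commute\<close>)
  also have "\<dots> = sum a U * of_nat ((card U - 1) choose (m - 1))"
    using assms by (simp add: card_subsets_containing sum_distrib_right)
  finally show ?thesis .
qed

lemma subset_sums_eq_if_le_average:
  fixes a :: "'b \<Rightarrow> nat"
  assumes "finite U" and "0 < m" and "m \<le> card U"
    and "\<And>A. A \<subseteq> U \<Longrightarrow> card A = m \<Longrightarrow> sum a A \<le> q"
    and average: "sum a U * m = q * card U"
    and "A \<subseteq> U" and "card A = m"
  shows "sum a A = q"
proof -
  let ?S = "{A. A \<subseteq> U \<and> card A = m}" and ?c = "(card U - 1) choose (m - 1)"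
  have "m * (card U * (\<Sum>B\<in>?S. sum a B)) = (sum a U * m) * (card U * ?c)"
    using assms(1,2) by (simp add: sum_over_subsets_of_card)
  also have "\<dots> = q * card U * (m * (card U choose m))"
    using average assms(2) by (simp add: times_binomial_minus1_eq)
  also have "\<dots> = m * (card U * (\<Sum>B\<in>?S. q))"
    using assms(1) by (simp add: n_subsets)
  finally have "(\<Sum>B\<in>?S. sum a B) = (\<Sum>B\<in>?S. q)"
    using assms(2,3) by simp
  then show ?thesis
    by (rule sum_mono_inv) (use assms in auto)
qed

lemma eq_if_subset_sums_eq:
  fixes a :: "'b \<Rightarrow> 'c::cancel_comm_monoid_add"
  assumes "finite U" and "0 < m" and "m < card U"
    and sums: "\<And>A. A \<subseteq> U \<Longrightarrow> card A = m \<Longrightarrow> sum a A = q"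
    and "l \<in> U" and "u \<in> U"
  shows "a l = a u"
proof (cases "l = u")
  case False
  have "m - 1 \<le> card (U - {l, u})"
    using assms False by (simp add: card_Diff_subset)
  then obtain B where B: "B \<subseteq> U - {l, u}" "card B = m - 1"
    by (meson obtain_subset_with_card_n)
  have B': "finite B" "l \<notin> B" "u \<notin> B"
    using B assms(1) finite_subset by auto
  have "sum a (insert l B) = q" "sum a (insert u B) = q"
    by (rule sums; use B B' assms in auto)+
  then have "a l + sum a B = a u + sum a B"
    using B' by simp
  then show ?thesis by simp
qed simp

lemma subspace_dim_add_le_if_Int_zero:
  fixes C W :: "('a::field ^ 'n::finite) set"
  assumes "vec.subspace C" and "vec.subspace W" and "C \<inter> W \<subseteq> {0}"
  shows "vec.dim C + vec.dim W \<le> CARD('n)"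
proof -
  have "vec.dim {x + y |x y. x \<in> C \<and> y \<in> W} + vec.dim (C \<inter> W) = vec.dim C + vec.dim W"
    by (rule vec.dim_sums_Int[OF assms(1,2)])
  moreover have "vec.dim (C \<inter> W) = 0"
    using assms(3) vec.dim_eq_0 by blast
  moreover have "vec.dim {x + y |x y. x \<in> C \<and> y \<in> W} \<le> vec.dim (UNIV :: ('a ^ 'n) set)"
    by (rule vec.dim_subset) simp
  ultimately show ?thesis
    by (simp add: vec.dim_UNIV card_cart_basis)
qed

definition coordinate_subspace :: "'n::finite set \<Rightarrow> ('a::zero ^ 'n) set" where
  "coordinate_subspace P = {x. \<forall>j. j \<notin> P \<longrightarrow> x $ j = 0}"

lemma subspace_coordinate_subspace:
  "vec.subspace (coordinate_subspace P :: ('a::field ^ 'n::finite) set)"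
  by (auto simp: vec.subspace_def coordinate_subspace_def)

lemma dim_coordinate_subspace:
  "vec.dim (coordinate_subspace P :: ('a::field ^ 'n::finite) set) = card P"
proof -
  define Q where "Q = (\<lambda>i. axis i (1::'a)) ` P"
  have "vec.independent Q"
    by (rule vec.independent_mono[OF independent_cart_basis]) (auto simp: Q_def cart_basis_def)
  moreover have "card Q = card P"
    unfolding Q_def by (rule card_image) (auto simp: inj_on_def axis_eq_axis)
  moreover have "vec.span Q = coordinate_subspace P"
  proof
    show "vec.span Q \<subseteq> coordinate_subspace P"
      by (rule vec.span_minimal[OF _ subspace_coordinate_subspace])
        (auto simp: Q_def axis_def coordinate_subspace_def)
    show "coordinate_subspace P \<subseteq> vec.span Q"
    proof
      fix x :: "'a ^ 'n" assume "x \<in> coordinate_subspace P"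
      then have "x = (\<Sum>i\<in>P. x $ i *s axis i 1)"
        unfolding coordinate_subspace_def
        by (subst (1) basis_expansion[symmetric, of x]) (auto intro: sum.mono_neutral_right)
      also have "\<dots> \<in> vec.span Q"
        by (intro vec.span_sum vec.span_scale vec.span_base) (simp add: Q_def)
      finally show "x \<in> vec.span Q" .
    qed
  qed
  ultimately show ?thesis
    by (metis vec.dim_span_eq_card_independent)
qed

lemma code_Int_coordinate_subspace_trivial:
  assumes "enat (card A) < labelweight_code L C" and "finite A"
  shows "C \<inter> coordinate_subspace (L -` A) \<subseteq> {0}"
proof
  fix x assume x: "x \<in> C \<inter> coordinate_subspace (L -` A)"
  show "x \<in> {0}"
  proof (rule ccontr)
    assume "x \<notin> {0}"
    then have "labelweight_code L C \<le> enat (labelweight_vec L x)"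
      unfolding labelweight_code_def using x by (auto intro: INF_lower)
    also have "labelweight_vec L x \<le> card A"
      using x assms(2) unfolding labelweight_vec_def coordinate_subspace_def
      by (auto intro: card_mono)
    finally show False
      using assms(1) by simp
  qed
qed

lemma dim_add_card_vimage_le:
  fixes C :: "('a::field ^ 'n::finite) set" and L :: "'n \<Rightarrow> nat"
  assumes "vec.subspace C" and "finite A" and "enat (card A) < labelweight_code L C"
  shows "vec.dim C + card (L -` A) \<le> CARD('n)"
  using subspace_dim_add_le_if_Int_zero[OF assms(1) subspace_coordinate_subspace
      code_Int_coordinate_subspace_trivial[OF assms(3,2)]]
  by (simp add: dim_coordinate_subspace)

lemma dim_eq_of_rate:
  fixes k n s m :: nat
  assumes "0 < k" and "0 < n" and "0 < s"
    and rate: "real k / real n = (real s - real m) / real s"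
  shows "m < s" and "k * s + n * m = n * s"
proof -
  have eq: "real k * real s = real n * (real s - real m)"
    using rate assms(2,3) by (simp add: field_simps)
  show "m < s"
  proof (rule ccontr)
    assume "\<not> m < s"
    then have "real n * (real s - real m) \<le> 0"
      by (simp add: mult_nonneg_nonpos)
    with eq have "real k * real s \<le> 0"
      by simp
    with assms(1,3) show False
      by (simp add: mult_le_0_iff)
  qed
  from eq have "real (k * s + n * m) = real (n * s)"
    by (simp add: algebra_simps)
  then show "k * s + n * m = n * s"
    by (simp only: of_nat_eq_iff)
qed

theorem mainTheorem3:
  fixes s d t :: nat
    and C :: "('a::field ^ 'n::finite) set"
    and L :: "'n \<Rightarrow> nat"
  assumes "s > 0" and "d > 0" and "t > 0"
    and "vec.subspace C"
    and "C \<noteq> {0}"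
    and "real (vec.dim C) / real CARD('n) = (real s - real d * real t) / real s"
    and "L ` UNIV = {1..s}"
    and "labelweight_code L C \<ge> enat (d * t + 1)"
  shows "\<forall>\<kappa>\<in>{1..s}. \<forall>\<mu>\<in>{1..s}. card (L -` {\<kappa>}) = card (L -` {\<mu>})"
proof -
  define a where "a = (\<lambda>l. card (L -` {l}))"
  have "0 < vec.dim C"
    using assms(4,5) vec.subspace_0 vec.dim_eq_0 by blast
  then have dt_lt: "d * t < s" and dim_eq: "vec.dim C * s + CARD('n) * (d * t) = CARD('n) * s"
    using dim_eq_of_rate[of "vec.dim C" "CARD('n)" s "d * t"] assms(1,6) by auto
  have "L -` {1..s} = UNIV"
    using assms(7) by auto
  then have total: "sum a {1..s} = CARD('n)"
    using card_vimage_eq_sum_card_fibers[of "{1..s}" L] unfolding a_def by simp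
  have bound: "sum a A \<le> CARD('n) - vec.dim C" if "A \<subseteq> {1..s}" and "card A = d * t" for A
  proof -
    have "finite A"
      using that(1) finite_subset by blast
    moreover have "enat (card A) < labelweight_code L C"
      using that(2) assms(8) by (simp add: Suc_ile_eq)
    ultimately have "vec.dim C + card (L -` A) \<le> CARD('n)"
      by (rule dim_add_card_vimage_le[OF assms(4)])
    then show ?thesis
      using card_vimage_eq_sum_card_fibers[OF \<open>finite A\<close>, of L] unfolding a_def by simp
  qed
  have average: "sum a {1..s} * (d * t) = (CARD('n) - vec.dim C) * card {1..s}"
    using total dim_eq by (simp add: diff_mult_distrib)
  have subset_sums: "sum a A = CARD('n) - vec.dim C" if "A \<subseteq> {1..s}" and "card A = d * t" for A
    by (rule subset_sums_eq_if_le_average[OF _ _ _ bound average that]) (use dt_lt assms(2,3) in auto)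
  have "a \<kappa> = a \<mu>" if "\<kappa> \<in> {1..s}" and "\<mu> \<in> {1..s}" for \<kappa> \<mu>
    by (rule eq_if_subset_sums_eq[OF _ _ _ subset_sums that]) (use dt_lt assms(2,3) in auto)
  then show ?thesis
    unfolding a_def by blast
qed

end
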